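(* Let $n\ge3$, $0<\epsilon<1$, define $\alpha,\beta,\gamma,\delta$, $P$, $Q$ as in the context, and let $$h''(\rho) = \frac{\rho^{n+1} - \rho^n + \rho^n P(\rho) + \alpha + \beta\rho}{(1-\rho)\rho\,Q(\rho)}.$$ If $\epsilon>0$ is sufficiently small, then near $\rho=\epsilon$ there is a Laurent expansion $$h''(\rho) = \frac{1}{\rho-\epsilon} + \hat Q_0 + \hat Q_1(\rho-\epsilon) + \cdots$$ with real coefficients $\hat Q_0,\hat Q_1,\dots$; i.e. $h''$ has a simple pole at $\rho=\epsilon$ with residue $1$.
   Context: $D(\epsilon) = -n\epsilon^{n+2} + (n+2)\epsilon^{n+1} + n - (n+2)\epsilon$, $N(\epsilon) = -n\epsilon^{n+1} + (n+1)\epsilon^n - 1$, $K(\epsilon) = -1 + \frac{n+1}{n-1}\epsilon - \epsilon^{n-1} + \frac{n-3}{n-1}\epsilon^n$, $M(\epsilon) = \frac{\epsilon^{n+1}-1}{n(n+1)} + \frac{\epsilon-\epsilon^n}{n(n-1)}$; $\delta = \Big(\epsilon^{n-2}(1-\epsilon) - \frac{(n+2)N K}{D} + \frac{n(n-3)}{n-1}\epsilon^{n-1} - (n-1)\epsilon^{n-2} + \frac{n+1}{n-1}\Big)\Big(\frac{(n+2)N}{D}M + \frac{-(n-1)\epsilon^n + n\epsilon^{n-1}-1}{n(n-1)}\Big)^{-1}$, $\gamma = n(n+1)(n+2)(M\delta + K)/D$, $\alpha = -1 - \frac{\delta}{n(n+1)} - \frac{\gamma}{(n+1)(n+2)}$,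 $\beta = \frac{n+1}{n-1} + \frac{\delta}{n(n-1)} + \frac{\gamma}{n(n+1)}$ (denominators are nonzero for small $\epsilon$); $P(\rho) = -\frac{2n+\delta}{n(n-1)} + \frac{(\delta-\gamma)\rho}{n(n+1)} + \frac{\gamma\rho^2}{(n+1)(n+2)}$, $Q(\rho) = \rho^{n-1} - \rho^n - \rho^nP(\rho) - \alpha - \beta\rho$. *)

theory Defs
  imports Complex_Main
begin

definition Dfun :: "nat \<Rightarrow> real \<Rightarrow> real" where
  "Dfun n e = - real n * e^(n+2) + (real n + 2) * e^(n+1) + real n - (real n + 2) * e"

definition Nfun :: "nat \<Rightarrow> real \<Rightarrow> real" where
  "Nfun n e = - real n * e^(n+1) + (real n + 1) * e^n - 1"

definition Kfun :: "nat \<Rightarrow> real \<Rightarrow> real" where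
  "Kfun n e = -1 + (real n + 1) / (real n - 1) * e - e^(n-1) + (real n - 3) / (real n - 1) * e^n"

definition Mfun :: "nat \<Rightarrow> real \<Rightarrow> real" where
  "Mfun n e = (e^(n+1) - 1) / (real n * (real n + 1)) + (e - e^n) / (real n * (real n - 1))"

definition delta :: "nat \<Rightarrow> real \<Rightarrow> real" where
  "delta n e =
    (e^(n-2) * (1 - e) - (real n + 2) * Nfun n e * Kfun n e / Dfun n e
      + real n * (real n - 3) / (real n - 1) * e^(n-1) - (real n - 1) * e^(n-2)
      + (real n + 1) / (real n - 1))
    / ((real n + 2) * Nfun n e / Dfun n e * Mfun n e
      + (- (real n - 1) * e^n + real n * e^(n-1) - 1) / (real n * (real n - 1)))"

definition gamma :: "nat \<Rightarrow> real \<Rightarrow> real" where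
  "gamma n e = real n * (real n + 1) * (real n + 2) * (Mfun n e * delta n e + Kfun n e) / Dfun n e"

definition alpha :: "nat \<Rightarrow> real \<Rightarrow> real" where
  "alpha n e = -1 - delta n e / (real n * (real n + 1)) - gamma n e / ((real n + 1) * (real n + 2))"

definition beta :: "nat \<Rightarrow> real \<Rightarrow> real" where
  "beta n e = (real n + 1) / (real n - 1) + delta n e / (real n * (real n - 1)) + gamma n e / (real n * (real n + 1))"

definition Pfun :: "nat \<Rightarrow> real \<Rightarrow> real \<Rightarrow> real" where
  "Pfun n e \<rho> = - (2 * real n + delta n e) / (real n * (real n - 1))
     + (delta n e - gamma n e) * \<rho> / (real n * (real n + 1))
     + gamma n e * \<rho>^2 / ((real n + 1) * (real n + 2))"

definition Qfun :: "nat \<Rightarrow> real \<Rightarrow> real \<Rightarrow> real" where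
  "Qfun n e \<rho> = \<rho>^(n-1) - \<rho>^n - \<rho>^n * Pfun n e \<rho> - alpha n e - beta n e * \<rho>"

definition hpp :: "nat \<Rightarrow> real \<Rightarrow> real \<Rightarrow> real" where
  "hpp n e \<rho> = (\<rho>^(n+1) - \<rho>^n + \<rho>^n * Pfun n e \<rho> + alpha n e + beta n e * \<rho>)
                 / ((1 - \<rho>) * \<rho> * Qfun n e \<rho>)"

end

theory Submission
  imports Defs "HOL-Complex_Analysis.Laurent_Convergence"
begin

(*
  By the choice of gamma and delta, Q(eps) = 0 and Q'(eps) = eps^(n-2) (1 - eps), provided D(eps) and
  the denominator of delta do not vanish; both are nonzero at eps = 0, hence for small eps > 0.
  Moreover h'' = rho^(n-2) (1 - rho) / Q - 1 / ((1 - rho) rho), whose second term is analytic near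
  eps in (0,1).  So in t = rho - eps the first term is g/f with f(0) = 0 and f'(0) = g(0) \<noteq> 0,
  i.e. it has a simple pole with residue 1, and subtracting 1/t leaves a convergent power series.
*)

lemma has_fps_expansion_imp_sums:
  fixes F :: "'a :: {banach, real_normed_div_algebra} fps"
  assumes "f has_fps_expansion F"
  shows "eventually (\<lambda>t. (\<lambda>k. fps_nth F k * t ^ k) sums f t) (nhds 0)"
proof -
  have "eventually (\<lambda>t. t \<in> eball 0 (fps_conv_radius F)) (nhds 0)"
    using assms by (intro eventually_nhds_in_open) (auto simp: has_fps_expansion_def zero_ereal_def)
  moreover have "eventually (\<lambda>t. eval_fps F t = f t) (nhds 0)"
    using assms by (auto simp: has_fps_expansion_def)
  ultimately show ?thesis
  proof eventually_elim
    case (elim t)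
    with sums_eval_fps[of t F] show ?case
      by (simp add: zero_ereal_def)
  qed
qed

lemma has_fps_expansion_punctured_sums:
  fixes H :: "'a :: {banach, real_normed_div_algebra} fps"
  assumes "(\<lambda>t. if t = 0 then c else u t) has_fps_expansion H"
  obtains r where "r > 0"
    and "\<And>t. t \<noteq> 0 \<Longrightarrow> norm t < r \<Longrightarrow> (\<lambda>k. fps_nth H k * t ^ k) sums u t"
proof -
  from has_fps_expansion_imp_sums[OF assms] obtain r where "r > 0"
    and r: "\<And>t. dist t 0 < r \<Longrightarrow>
      (\<lambda>k. fps_nth H k * t ^ k) sums (if t = 0 then c else u t)"
    unfolding eventually_nhds_metric by blast
  show ?thesis
  proof (rule that[OF \<open>r > 0\<close>])
    fix t :: 'a
    assume "t \<noteq> 0" "norm t < r"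
    with r[of t] show "(\<lambda>k. fps_nth H k * t ^ k) sums u t"
      by (simp add: dist_norm)
  qed
qed

lemma has_fps_expansion_divide_X:
  fixes F :: "'a :: {banach, real_normed_field} fps"
  assumes fF: "f has_fps_expansion F" and "fps_nth F 0 = 0"
  shows "(\<lambda>t. if t = 0 then fps_nth F 1 else f t / t) has_fps_expansion fps_shift 1 F"
proof (cases "F = 0")
  case True
  have "eventually (\<lambda>t. eval_fps F t = f t) (nhds 0)"
    using fF by (simp add: has_fps_expansion_def)
  hence "eventually (\<lambda>t. eval_fps 0 t = (if t = 0 then fps_nth F 1 else f t / t)) (nhds 0)"
    by eventually_elim (simp add: True eval_fps_def)
  thus ?thesis
    by (simp add: True has_fps_expansion_def)
next
  case False
  hence "1 \<le> subdegree F"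
    using assms(2) by (intro subdegree_geI) auto
  from has_fps_expansion_shift[OF fF this refl] show ?thesis
    by (simp only: power_one_right)
qed

lemma has_fps_expansion_simple_pole:
  fixes f g :: "'a :: {banach, real_normed_field} \<Rightarrow> 'a"
  assumes fF: "f has_fps_expansion F" and gG: "g has_fps_expansion G"
    and "f 0 = 0" and f': "(f has_field_derivative g 0) (at 0)" and "g 0 \<noteq> 0"
  obtains H c where "(\<lambda>t. if t = 0 then c else g t / f t - 1 / t) has_fps_expansion H"
    and "eventually (\<lambda>t. f t \<noteq> 0) (at 0)"
proof -
  have F0: "fps_nth F 0 = 0"
    using has_fps_expansion_imp_0_eq_fps_nth_0[OF fF] \<open>f 0 = 0\<close> by simp
  have "fps_nth (fps_deriv F) 0 = deriv f 0"
    using has_fps_expansion_imp_0_eq_fps_nth_0[OF has_fps_expansion_deriv[OF fF]] by simp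
  hence F1: "fps_nth F 1 = g 0"
    using DERIV_imp_deriv[OF f'] by simp
  \<comment> \<open>With \<open>f t = t * q t\<close> and \<open>q 0 = g 0\<close>:
    \<open>g t / f t - 1 / t = ((g t - q t) / t) / q t\<close>, a quotient of power series whose
    denominator does not vanish at 0.\<close>
  define q where "q = (\<lambda>t. if t = 0 then g 0 else f t / t)"
  have qF: "q has_fps_expansion fps_shift 1 F"
    unfolding q_def using has_fps_expansion_divide_X[OF fF F0, unfolded F1] .
  have "isCont q 0"
    using has_fps_expansion_imp_continuous[OF qF] by simp
  hence "eventually (\<lambda>t. q t \<noteq> 0) (at 0)"
    using \<open>g 0 \<noteq> 0\<close> by (intro tendsto_imp_eventually_ne) (auto simp: q_def isCont_def)
  hence ev_q: "eventually (\<lambda>t. t \<noteq> 0 \<and> q t \<noteq> 0) (at 0)"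
    by (auto simp: eventually_at_filter elim: eventually_mono)
  have "(\<lambda>t. g t - q t) has_fps_expansion G - fps_shift 1 F"
    by (intro fps_expansion_intros gG qF)
  moreover have "fps_nth (G - fps_shift 1 F) 0 = 0"
    using has_fps_expansion_imp_0_eq_fps_nth_0[OF gG] F1 by simp
  ultimately have uH:
      "(\<lambda>t. (if t = 0 then fps_nth (G - fps_shift 1 F) 1 else (g t - q t) / t) / q t)
      has_fps_expansion fps_shift 1 (G - fps_shift 1 F) / fps_shift 1 F"
    (is "?u has_fps_expansion ?H")
    by (intro has_fps_expansion_divide' has_fps_expansion_divide_X qF)
       (use F1 \<open>g 0 \<noteq> 0\<close> in \<open>simp_all add: numeral_eq_Suc\<close>)
  have ev_f: "eventually (\<lambda>t. f t \<noteq> 0) (at 0)"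
    using ev_q by eventually_elim (auto simp: q_def split: if_splits)
  have "eventually (\<lambda>t. ?u t = g t / f t - 1 / t) (at 0)"
    using ev_q ev_f by eventually_elim (simp add: q_def divide_simps)
  hence "eventually (\<lambda>t. ?u t = (if t = 0 then ?u 0 else g t / f t - 1 / t)) (nhds 0)"
    unfolding eventually_at_filter by eventually_elim auto
  hence "(\<lambda>t. if t = 0 then ?u 0 else g t / f t - 1 / t) has_fps_expansion ?H"
    by (rule has_fps_expansion_cong[THEN iffD1, OF _ refl uH])
  from this ev_f show ?thesis
    by (rule that)
qed

lemma power_eq_power_minus_2_mult:
  fixes x :: "'a :: comm_monoid_mult"
  assumes "n \<ge> 2"
  shows "x^(n-1) = x^(n-2) * x" "x^n = x^(n-2) * x^2"
    "x^(n+1) = x^(n-2) * x^3" "x^(n+2) = x^(n-2) * x^4"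
proof -
  obtain k where n: "n = k + 2" using assms by (metis add.commute le_Suc_ex)
  show "x^(n-1) = x^(n-2) * x" "x^n = x^(n-2) * x^2"
    "x^(n+1) = x^(n-2) * x^3" "x^(n+2) = x^(n-2) * x^4"
    unfolding n by (simp_all add: power_add mult_ac eval_nat_numeral)
qed

lemma Qfun_self:
  assumes "n \<ge> 3"
  shows "Qfun n e e = - Mfun n e * delta n e
     + Dfun n e * gamma n e / (real n * (real n + 1) * (real n + 2)) - Kfun n e"
proof -
  have "real n \<noteq> 0" "real n - 1 \<noteq> 0" "real n + 1 \<noteq> 0" "real n + 2 \<noteq> 0"
    using assms by auto
  moreover have "2 \<le> n" using assms by simp
  ultimately show ?thesis
    unfolding Qfun_def Pfun_def alpha_def beta_def Mfun_def Dfun_def Kfun_def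
      power_eq_power_minus_2_mult[OF \<open>2 \<le> n\<close>]
    by (simp add: divide_simps) (simp add: algebra_simps power2_eq_square eval_nat_numeral)
qed

lemma Qfun_self_eq_0:
  assumes "n \<ge> 3" and "Dfun n e \<noteq> 0"
  shows "Qfun n e e = 0"
proof -
  have "gamma n e * Dfun n e =
      real n * (real n + 1) * (real n + 2) * (Mfun n e * delta n e + Kfun n e)"
    using assms(2) by (simp add: gamma_def)
  moreover have "real n * (real n + 1) * (real n + 2) \<noteq> 0"
    using assms(1) by simp
  ultimately show ?thesis
    unfolding Qfun_self[OF assms(1)] by (simp add: field_simps)
qed

lemma has_real_derivative_Pfun:
  "(Pfun n e has_real_derivative
     (delta n e - gamma n e) / (real n * (real n + 1))
     + 2 * gamma n e / ((real n + 1) * (real n + 2)) * r) (at r)"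
proof -
  have P: "Pfun n e = (\<lambda>r. - (2 * real n + delta n e) / (real n * (real n - 1))
     + (delta n e - gamma n e) / (real n * (real n + 1)) * r
     + gamma n e / ((real n + 1) * (real n + 2)) * r^2)"
    by (simp add: fun_eq_iff Pfun_def)
  show ?thesis
    unfolding P by (rule derivative_eq_intros refl | simp)+
qed

definition dQfun :: "nat \<Rightarrow> real \<Rightarrow> real \<Rightarrow> real" where
  "dQfun n e r = (real n - 1) * r^(n-2) - real n * r^(n-1) - real n * r^(n-1) * Pfun n e r
     - r^n * ((delta n e - gamma n e) / (real n * (real n + 1))
              + 2 * gamma n e / ((real n + 1) * (real n + 2)) * r)
     - beta n e"

lemma has_real_derivative_Qfun:
  assumes "n \<ge> 2"
  shows "(Qfun n e has_real_derivative dQfun n e r) (at r)"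
proof -
  have D: "(Qfun n e has_real_derivative real (n - 1) * r ^ (n - 1 - Suc 0) - real n * r ^ (n - Suc 0)
        - (real n * r ^ (n - Suc 0) * Pfun n e r + ((delta n e - gamma n e) / (real n * (real n + 1))
              + 2 * gamma n e / ((real n + 1) * (real n + 2)) * r) * r ^ n) - 0 - beta n e * 1) (at r)"
    (is "(_ has_real_derivative ?D) _")
    unfolding Qfun_def[abs_def] by (rule derivative_eq_intros has_real_derivative_Pfun refl)+ simp
  have nat_eqs: "n - 1 - Suc 0 = n - 2" "n - Suc 0 = n - 1" "real (n - 1) = real n - 1"
    using assms by auto
  have "?D = dQfun n e r"
    unfolding dQfun_def nat_eqs by (simp add: algebra_simps)
  with D show ?thesis
    by simp
qed

lemma dQfun_self:
  assumes "n \<ge> 3"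
  shows "dQfun n e e =
      delta n e * (- (real n - 1) * e^n + real n * e^(n-1) - 1) / (real n * (real n - 1))
      + gamma n e * Nfun n e / (real n * (real n + 1)) + (real n - 1) * e^(n-2)
      - real n * (real n - 3) / (real n - 1) * e^(n-1) - (real n + 1) / (real n - 1)"
proof -
  have "real n \<noteq> 0" "real n - 1 \<noteq> 0" "real n + 1 \<noteq> 0" "real n + 2 \<noteq> 0"
    using assms by auto
  moreover have "2 \<le> n" using assms by simp
  ultimately show ?thesis
    unfolding dQfun_def Pfun_def alpha_def beta_def Nfun_def
      power_eq_power_minus_2_mult[OF \<open>2 \<le> n\<close>]
    by (simp add: divide_simps) (simp add: algebra_simps power2_eq_square eval_nat_numeral)
qed

definition delta_denom :: "nat \<Rightarrow> real \<Rightarrow> real" where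
  "delta_denom n e = (real n + 2) * Nfun n e / Dfun n e * Mfun n e
     + (- (real n - 1) * e^n + real n * e^(n-1) - 1) / (real n * (real n - 1))"

lemma dQfun_self_eq:
  assumes "n \<ge> 3" and "Dfun n e \<noteq> 0" and "delta_denom n e \<noteq> 0"
  shows "dQfun n e e = e^(n-2) * (1 - e)"
proof -
  have "real n * (real n + 1) \<noteq> 0"
    using assms(1) by auto
  hence "gamma n e * Nfun n e / (real n * (real n + 1))
      = (real n + 2) * Nfun n e * (Mfun n e * delta n e + Kfun n e) / Dfun n e"
    unfolding gamma_def by (simp add: ac_simps)
  hence "dQfun n e e =
      delta n e * delta_denom n e + (real n + 2) * Nfun n e * Kfun n e / Dfun n e
      + (real n - 1) * e^(n-2) - real n * (real n - 3) / (real n - 1) * e^(n-1)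
      - (real n + 1) / (real n - 1)"
    unfolding dQfun_self[OF assms(1)] delta_denom_def using assms(2) by (simp add: field_simps)
  also have "delta n e * delta_denom n e =
      e^(n-2) * (1 - e) - (real n + 2) * Nfun n e * Kfun n e / Dfun n e
      + real n * (real n - 3) / (real n - 1) * e^(n-1) - (real n - 1) * e^(n-2)
      + (real n + 1) / (real n - 1)"
    using assms(3) unfolding delta_def delta_denom_def by simp
  finally show ?thesis by simp
qed

lemma hpp_eq:
  assumes "n \<ge> 2" and "r \<noteq> 0" "r \<noteq> 1" and "Qfun n e r \<noteq> 0"
  shows "hpp n e r = r^(n-2) * (1 - r) / Qfun n e r - 1 / ((1 - r) * r)"
proof -
  have "r^(n+1) - r^n + r^n * Pfun n e r + alpha n e + beta n e * r
      = r^(n-1) * (1 - r)^2 - Qfun n e r"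
    unfolding Qfun_def power_eq_power_minus_2_mult[OF assms(1)]
    by (simp add: algebra_simps power2_eq_square eval_nat_numeral)
  moreover have "r^(n-1) = r^(n-2) * r"
    by (rule power_eq_power_minus_2_mult[OF assms(1)])
  ultimately show ?thesis
    unfolding hpp_def using assms(2-4)
    by (simp add: divide_simps) (simp add: algebra_simps power2_eq_square)
qed

lemma eventually_nondegenerate:
  assumes "n \<ge> 3"
  shows "eventually (\<lambda>e. Dfun n e \<noteq> 0 \<and> delta_denom n e \<noteq> 0) (at_right 0)"
proof -
  have zero_powers:
      "(0::real)^n = 0" "(0::real)^(n-1) = 0" "(0::real)^(n+1) = 0" "(0::real)^(n+2) = 0"
    using assms by simp_all
  have D0: "Dfun n 0 = real n"
    by (simp add: Dfun_def zero_powers)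
  have "delta_denom n 0 = - 2 / (real n * real n * (real n + 1) * (real n - 1))"
    using assms unfolding delta_denom_def Nfun_def Mfun_def D0 zero_powers
    by (simp add: divide_simps) (simp add: algebra_simps)
  hence "delta_denom n 0 \<noteq> 0"
    using assms by simp
  have cont_D: "isCont (Dfun n) 0"
    unfolding Dfun_def[abs_def] by (intro continuous_intros)
  have "isCont (delta_denom n) 0"
    unfolding delta_denom_def[abs_def] Nfun_def Mfun_def using cont_D D0 assms
    by (intro continuous_intros) auto
  have "eventually (\<lambda>e. f e \<noteq> 0) (at_right 0)"
    if "isCont f 0" "f 0 \<noteq> 0" for f :: "real \<Rightarrow> real"
    using that by (intro tendsto_imp_eventually_ne)
      (auto simp flip: continuous_within intro: continuous_at_imp_continuous_at_within)
  with cont_D \<open>isCont (delta_denom n) 0\<close> \<open>delta_denom n 0 \<noteq> 0\<close> show ?thesis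
    using assms by (intro eventually_conj) (auto simp: D0)
qed

lemma Qfun_shift_has_fps_expansion:
  "\<exists>F. (\<lambda>t. Qfun n e (e + t)) has_fps_expansion F"
  unfolding Qfun_def Pfun_def divide_inverse by (rule exI, (rule fps_expansion_intros)+)

lemma Qfun_shift_simple_pole:
  assumes n: "n \<ge> 3" and e: "0 < e" "e < 1" and "Dfun n e \<noteq> 0" "delta_denom n e \<noteq> 0"
  obtains P c where
    "(\<lambda>t. if t = 0 then c else (e + t)^(n-2) * (1 - (e + t)) / Qfun n e (e + t) - 1 / t)
       has_fps_expansion P"
    and "eventually (\<lambda>t. Qfun n e (e + t) \<noteq> 0) (at 0)"
proof -
  define f where "f t = Qfun n e (e + t)" for t
  define g where "g t = (e + t)^(n-2) * (1 - (e + t))" for t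
  obtain F where "f has_fps_expansion F"
    using Qfun_shift_has_fps_expansion unfolding f_def by blast
  moreover have "g has_fps_expansion (fps_const e + fps_X)^(n-2) * (1 - (fps_const e + fps_X))"
    unfolding g_def by (intro fps_expansion_intros)
  moreover have "f 0 = 0"
    using Qfun_self_eq_0[OF n \<open>Dfun n e \<noteq> 0\<close>] by (simp add: f_def)
  moreover have "(f has_field_derivative dQfun n e (e + 0) * 1) (at 0)"
    unfolding f_def[abs_def] using n
    by (intro DERIV_chain2[OF has_real_derivative_Qfun]) (auto intro!: derivative_eq_intros)
  hence "(f has_field_derivative g 0) (at 0)"
    using dQfun_self_eq[OF n assms(4,5)] by (simp add: g_def)
  moreover have "g 0 \<noteq> 0"
    using e by (simp add: g_def)
  ultimately show ?thesis
    using has_fps_expansion_simple_pole that unfolding f_def g_def by blast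
qed

lemma hpp_minus_pole_has_fps_expansion:
  assumes n: "n \<ge> 3" and e: "0 < e" "e < 1" and "Dfun n e \<noteq> 0" "delta_denom n e \<noteq> 0"
  obtains H c where "(\<lambda>t. if t = 0 then c else hpp n e (e + t) - 1 / t) has_fps_expansion H"
proof -
  obtain P c where
    P: "(\<lambda>t. if t = 0 then c else (e + t)^(n-2) * (1 - (e + t)) / Qfun n e (e + t) - 1 / t)
      has_fps_expansion P"
    and ev_Q: "eventually (\<lambda>t. Qfun n e (e + t) \<noteq> 0) (at 0)"
    using Qfun_shift_simple_pole[OF assms] by blast
  have n2: "2 \<le> n"
    using n by simp
  define W where "W = (1 - (fps_const e + fps_X)) * (fps_const e + fps_X)"
  have "(\<lambda>t. (1 - (e + t)) * (e + t)) has_fps_expansion W"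
    unfolding W_def by (intro fps_expansion_intros)
  moreover have "fps_nth W 0 \<noteq> 0"
    using e by (simp add: W_def)
  ultimately have uP:
      "(\<lambda>t. (if t = 0 then c else (e + t)^(n-2) * (1 - (e + t)) / Qfun n e (e + t) - 1 / t)
        - 1 / ((1 - (e + t)) * (e + t))) has_fps_expansion P - 1 / W"
    (is "?u has_fps_expansion _")
    by (intro fps_expansion_intros P)
  have "eventually (\<lambda>t. e + t \<noteq> 0 \<and> e + t \<noteq> 1) (at 0)"
    using e by (intro eventually_conj tendsto_imp_eventually_ne) (auto intro!: tendsto_eq_intros)
  with ev_Q have "eventually (\<lambda>t. ?u t = hpp n e (e + t) - 1 / t) (at 0)"
    unfolding eventually_at_filter by eventually_elim (auto simp: hpp_eq[OF n2])
  hence "eventually (\<lambda>t. ?u t = (if t = 0 then ?u 0 else hpp n e (e + t) - 1 / t)) (nhds 0)"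
    unfolding eventually_at_filter by eventually_elim auto
  from has_fps_expansion_cong[THEN iffD1, OF this refl uP] show ?thesis
    by (rule that)
qed

theorem lemma4p6:
  fixes n :: nat
  assumes "n \<ge> 3"
  shows "\<exists>e0>0. \<forall>e::real. 0 < e \<and> e < 1 \<and> e < e0 \<longrightarrow>
           (\<exists>(c::nat \<Rightarrow> real) r. r > 0 \<and>
              (\<forall>\<rho>::real. 0 < \<bar>\<rho> - e\<bar> \<and> \<bar>\<rho> - e\<bar> < r \<longrightarrow>
                 (\<lambda>k. c k * (\<rho> - e)^k) sums (hpp n e \<rho> - 1 / (\<rho> - e))))"
proof -
  obtain e0 where "e0 > 0"
    and e0: "\<And>e. 0 < e \<Longrightarrow> e < e0 \<Longrightarrow> Dfun n e \<noteq> 0 \<and> delta_denom n e \<noteq> 0"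
    using eventually_nondegenerate[OF assms] unfolding eventually_at_right_field by auto
  have "\<exists>c r. r > 0 \<and> (\<forall>\<rho>. 0 < \<bar>\<rho> - e\<bar> \<and> \<bar>\<rho> - e\<bar> < r \<longrightarrow>
      (\<lambda>k. c k * (\<rho> - e)^k) sums (hpp n e \<rho> - 1 / (\<rho> - e)))"
    if e: "0 < e" "e < 1" "e < e0" for e
  proof -
    obtain H c where "(\<lambda>t. if t = 0 then c else hpp n e (e + t) - 1 / t) has_fps_expansion H"
      using hpp_minus_pole_has_fps_expansion[OF assms e(1,2)] e0[OF e(1,3)] by blast
    then obtain r where "r > 0" and r: "\<And>t. t \<noteq> 0 \<Longrightarrow> norm t < r \<Longrightarrow>
        (\<lambda>k. fps_nth H k * t^k) sums (hpp n e (e + t) - 1 / t)"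
      by (rule has_fps_expansion_punctured_sums) auto
    show ?thesis
    proof (intro exI[of _ "fps_nth H"] exI[of _ r] conjI allI impI)
      fix \<rho> :: real
      assume "0 < \<bar>\<rho> - e\<bar> \<and> \<bar>\<rho> - e\<bar> < r"
      with r[of "\<rho> - e"]
      show "(\<lambda>k. fps_nth H k * (\<rho> - e)^k) sums (hpp n e \<rho> - 1 / (\<rho> - e))"
        by simp
    qed fact
  qed
  with \<open>e0 > 0\<close> show ?thesis
    by blast
qed

end
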